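(* Let $T$ be a ditree and let $S$ be a source set or a sink set of $T$ with $|S|\ge 2$ that contains no leaf of $T$. Suppose $M$ is a minimum-size geodetic set of $T$ with $|M\cap S|=1$, say $M\cap S=\{u\}$. For any $w\in S$, the set $N=(M\setminus\{u\})\cup\{w\}$ is also a minimum-size geodetic set of $T$.
   Context: All digraphs are finite, without loops or parallel arcs. The underlying undirected graph of a digraph is obtained by forgetting orientations and deleting parallel edges. A ditree is a digraph whose underlying undirected graph is a tree (it may contain $2$-cycles, i.e., pairs of opposite arcs $uv,vu$). A leaf is a vertex of degree $1$ in the underlying undirected graph. For $S\subseteq V(D)$, $N^-(S)$ (resp. $N^+(S)$) is the set of vertices outside $S$ having an arc to (resp. from) some vertex of $S$. A source set is a maximal strongly connected component $S$ with $N^-(S)\setminus S=\emptyset$; a sink set is a maximal strongly connected component $S$ with $N^+(S)\setminus S=\emptyset$. For vertices $u,v$, $I(u,v)$ is the set of vertices on some shortest directed path from $u$ to $v$; for $S\subseteq V(D)$, $I(S)=\bigcup_{u,v\in S}(I(u,v)\cup I(v,u))$. A geodetic set is a set $S$ with $I(S)=V(D)$. *)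

theory Defs
  imports Main
begin

definition digraph :: "'a set \<Rightarrow> ('a \<times> 'a) set \<Rightarrow> bool" where
  "digraph V A \<longleftrightarrow> finite V \<and> A \<subseteq> V \<times> V \<and> (\<forall>v. (v, v) \<notin> A)"

definition uadj :: "('a \<times> 'a) set \<Rightarrow> 'a \<Rightarrow> 'a \<Rightarrow> bool" where
  "uadj A u v \<longleftrightarrow> (u, v) \<in> A \<or> (v, u) \<in> A"

definition uconnected :: "'a set \<Rightarrow> ('a \<times> 'a) set \<Rightarrow> bool" where
  "uconnected V A \<longleftrightarrow> (\<forall>u\<in>V. \<forall>v\<in>V. (u, v) \<in> (A \<union> A\<inverse>)\<^sup>*)"

definition ucycle :: "'a set \<Rightarrow> ('a \<times> 'a) set \<Rightarrow> 'a list \<Rightarrow> bool" where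
  "ucycle V A cs \<longleftrightarrow> length cs \<ge> 3 \<and> distinct cs \<and> set cs \<subseteq> V
     \<and> (\<forall>i. Suc i < length cs \<longrightarrow> uadj A (cs ! i) (cs ! Suc i))
     \<and> uadj A (last cs) (hd cs)"

definition ditree :: "'a set \<Rightarrow> ('a \<times> 'a) set \<Rightarrow> bool" where
  "ditree V A \<longleftrightarrow> digraph V A \<and> V \<noteq> {} \<and> uconnected V A \<and> (\<nexists>cs. ucycle V A cs)"

definition leaf :: "'a set \<Rightarrow> ('a \<times> 'a) set \<Rightarrow> 'a \<Rightarrow> bool" where
  "leaf V A v \<longleftrightarrow> v \<in> V \<and> card {x \<in> V. uadj A v x} = 1"

definition reach :: "('a \<times> 'a) set \<Rightarrow> 'a \<Rightarrow> 'a \<Rightarrow> bool" where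
  "reach A u v \<longleftrightarrow> (u, v) \<in> A\<^sup>*"

definition strong_component :: "'a set \<Rightarrow> ('a \<times> 'a) set \<Rightarrow> 'a set \<Rightarrow> bool" where
  "strong_component V A S \<longleftrightarrow> S \<noteq> {} \<and> S \<subseteq> V
     \<and> (\<forall>u\<in>S. \<forall>v\<in>S. reach A u v)
     \<and> (\<forall>x\<in>V. (\<exists>u\<in>S. reach A u x \<and> reach A x u) \<longrightarrow> x \<in> S)"

definition in_nbhd :: "('a \<times> 'a) set \<Rightarrow> 'a set \<Rightarrow> 'a set" where
  "in_nbhd A S = {x. x \<notin> S \<and> (\<exists>y\<in>S. (x, y) \<in> A)}"

definition out_nbhd :: "('a \<times> 'a) set \<Rightarrow> 'a set \<Rightarrow> 'a set" where
  "out_nbhd A S = {x. x \<notin> S \<and> (\<exists>y\<in>S. (y, x) \<in> A)}"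

definition source_set :: "'a set \<Rightarrow> ('a \<times> 'a) set \<Rightarrow> 'a set \<Rightarrow> bool" where
  "source_set V A S \<longleftrightarrow> strong_component V A S \<and> in_nbhd A S - S = {}"

definition sink_set :: "'a set \<Rightarrow> ('a \<times> 'a) set \<Rightarrow> 'a set \<Rightarrow> bool" where
  "sink_set V A S \<longleftrightarrow> strong_component V A S \<and> out_nbhd A S - S = {}"

definition dwalk :: "'a set \<Rightarrow> ('a \<times> 'a) set \<Rightarrow> 'a list \<Rightarrow> 'a \<Rightarrow> 'a \<Rightarrow> bool" where
  "dwalk V A p u v \<longleftrightarrow> p \<noteq> [] \<and> hd p = u \<and> last p = v \<and> set p \<subseteq> V
     \<and> (\<forall>i. Suc i < length p \<longrightarrow> (p ! i, p ! Suc i) \<in> A)"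

(* shortest directed path from u to v (a walk of minimum length is a path) *)
definition shortest_dpath :: "'a set \<Rightarrow> ('a \<times> 'a) set \<Rightarrow> 'a list \<Rightarrow> 'a \<Rightarrow> 'a \<Rightarrow> bool" where
  "shortest_dpath V A p u v \<longleftrightarrow> dwalk V A p u v \<and> (\<forall>q. dwalk V A q u v \<longrightarrow> length p \<le> length q)"

definition interval :: "'a set \<Rightarrow> ('a \<times> 'a) set \<Rightarrow> 'a \<Rightarrow> 'a \<Rightarrow> 'a set" where
  "interval V A u v = \<Union> {set p | p. shortest_dpath V A p u v}"

definition interval_set :: "'a set \<Rightarrow> ('a \<times> 'a) set \<Rightarrow> 'a set \<Rightarrow> 'a set" where
  "interval_set V A S = (\<Union>u\<in>S. \<Union>v\<in>S. interval V A u v \<union> interval V A v u)"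

definition geodetic :: "'a set \<Rightarrow> ('a \<times> 'a) set \<Rightarrow> 'a set \<Rightarrow> bool" where
  "geodetic V A S \<longleftrightarrow> S \<subseteq> V \<and> interval_set V A S = V"

definition min_geodetic :: "'a set \<Rightarrow> ('a \<times> 'a) set \<Rightarrow> 'a set \<Rightarrow> bool" where
  "min_geodetic V A M \<longleftrightarrow> geodetic V A M \<and> (\<forall>S. geodetic V A S \<longrightarrow> card M \<le> card S)"

end

theory Submission
  imports Defs
begin

(* Because S is a source set, every vertex that reaches S lies in S, and S is strongly connected,
   so w reaches every vertex that u reaches. In the underlying tree a vertex lies on every walk, in
   particular on every shortest directed path, between two vertices it separates. A vertex z
   outside S lies on a geodesic of M; if that geodesic starts at u, then z separates u (hence also
   w, which is joined to u by a geodesic inside S) from its end b, so z lies on a geodesic from w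
   to b. A vertex z of S is not a leaf, so it has a neighbour on the side away from w, and the
   geodesic of M covering that neighbour provides a member b of M - {u} beyond z; again z lies on
   a geodesic from w to b. Sink sets are source sets of the reversed digraph. *)

definition walk :: "('a \<times> 'a) set \<Rightarrow> 'a list \<Rightarrow> bool" where
  "walk R p \<longleftrightarrow> p \<noteq> [] \<and> successively (\<lambda>x y. (x, y) \<in> R) p"

lemma walk_Nil [simp]: "\<not> walk R []"
  by (simp add: walk_def)

lemma walk_Cons: "walk R (x # xs) \<longleftrightarrow> xs = [] \<or> (x, hd xs) \<in> R \<and> walk R xs"
  by (auto simp: walk_def successively_Cons)

lemma walk_snoc: "walk R (xs @ [y]) \<longleftrightarrow> xs = [] \<or> walk R xs \<and> (last xs, y) \<in> R"
  by (auto simp: walk_def successively_append_iff)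

lemma walk_append_iff: "walk R (xs @ y # ys) \<longleftrightarrow> walk R (xs @ [y]) \<and> walk R (y # ys)"
  by (auto simp: walk_def successively_append_iff)

lemma dwalk_iff_walk: "dwalk V A p u v \<longleftrightarrow> walk A p \<and> hd p = u \<and> last p = v \<and> set p \<subseteq> V"
  unfolding dwalk_def walk_def successively_conv_nth by blast

lemma walk_mono:
  assumes "walk R p" "\<And>x y. x \<in> set p \<Longrightarrow> y \<in> set p \<Longrightarrow> (x, y) \<in> R \<Longrightarrow> (x, y) \<in> R'"
  shows "walk R' p"
  using assms successively_mono[of "\<lambda>x y. (x, y) \<in> R" p "\<lambda>x y. (x, y) \<in> R'"]
  by (simp add: walk_def)

lemma walk_rtrancl: "walk R p \<Longrightarrow> (hd p, last p) \<in> R\<^sup>*"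
  by (induction p) (auto simp: walk_Cons intro: converse_rtrancl_into_rtrancl)

lemma walk_rtrancl_mem:
  assumes "walk R p" "x \<in> set p"
  shows "(hd p, x) \<in> R\<^sup>*" "(x, last p) \<in> R\<^sup>*"
proof -
  obtain xs ys where p: "p = xs @ x # ys" using assms(2) by (meson split_list)
  have "walk R (xs @ [x])" "walk R (x # ys)"
    using walk_append_iff[of R xs x ys] assms(1) unfolding p by simp_all
  then show "(hd p, x) \<in> R\<^sup>*" "(x, last p) \<in> R\<^sup>*"
    using walk_rtrancl p by (cases xs; fastforce)+
qed

lemma rtrancl_imp_walk: "(x, y) \<in> R\<^sup>* \<Longrightarrow> \<exists>p. walk R p \<and> hd p = x \<and> last p = y"
proof (induction rule: converse_rtrancl_induct)
  case base then show ?case by (intro exI[of _ "[y]"]) (simp add: walk_def)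
next
  case (step x x')
  then obtain p where "walk R p" "hd p = x'" "last p = y" by blast
  with step show ?case by (intro exI[of _ "x # p"]) (auto simp: walk_Cons)
qed

lemma walk_set_subset: "walk R p \<Longrightarrow> R \<subseteq> V \<times> V \<Longrightarrow> hd p \<in> V \<Longrightarrow> set p \<subseteq> V"
  by (induction p) (auto simp: walk_Cons)

lemma walk_shortcut:
  assumes "walk R p" "\<not> distinct p"
  obtains q where "walk R q" "hd q = hd p" "last q = last p" "length q < length p"
    "set q \<subseteq> set p"
proof -
  obtain xs ys zs y where p: "p = xs @ [y] @ ys @ [y] @ zs"
    using assms(2) not_distinct_decomp by blast
  have "walk R (xs @ [y])" "walk R (y # ys @ y # zs)"
    using walk_append_iff[of R xs y "ys @ y # zs"] assms(1) unfolding p by simp_all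
  then have "walk R (xs @ y # zs)"
    using walk_append_iff[of R xs y zs] walk_append_iff[of R "y # ys" y zs] by simp
  moreover have "hd (xs @ y # zs) = hd p" "last (xs @ y # zs) = last p"
    using p by (cases xs; simp)+
  ultimately show thesis using that[of "xs @ y # zs"] p by auto
qed

lemma rtrancl_imp_distinct_walk:
  assumes "(x, y) \<in> R\<^sup>*"
  obtains p where "walk R p" "hd p = x" "last p = y" "distinct p"
proof -
  let ?P = "\<lambda>p. walk R p \<and> hd p = x \<and> last p = y"
  obtain p0 where "?P p0" using rtrancl_imp_walk[OF assms] by blast
  then obtain p where p: "?P p" and min: "\<forall>q. ?P q \<longrightarrow> length p \<le> length q"
    using ex_has_least_nat[of ?P p0 length] by blast
  have "distinct p"
  proof (rule ccontr)
    assume "\<not> distinct p"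
    with p obtain q where "?P q" "length q < length p" by (metis walk_shortcut)
    with min show False by fastforce
  qed
  with p that show thesis by blast
qed

lemma shortest_dpath_distinct:
  assumes "shortest_dpath V A p u v"
  shows "distinct p"
proof (rule ccontr)
  have p: "walk A p" "hd p = u" "last p = v" "set p \<subseteq> V"
    and min: "\<forall>q. dwalk V A q u v \<longrightarrow> length p \<le> length q"
    using assms unfolding shortest_dpath_def dwalk_iff_walk by blast+
  assume "\<not> distinct p"
  with p obtain q where "walk A q" "hd q = u" "last q = v" "length q < length p"
    "set q \<subseteq> V"
    by (metis walk_shortcut subset_trans)
  then show False using min unfolding dwalk_iff_walk by fastforce
qed

lemma shortest_dpath_exists:
  assumes "digraph V A" "u \<in> V" "(u, v) \<in> A\<^sup>*"
  obtains p where "shortest_dpath V A p u v"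
proof -
  obtain p where "walk A p" "hd p = u" "last p = v"
    using rtrancl_imp_walk[OF assms(3)] by blast
  moreover have "set p \<subseteq> V"
    using walk_set_subset calculation assms(1,2) unfolding digraph_def by metis
  ultimately have "dwalk V A p u v" unfolding dwalk_iff_walk by simp
  then show thesis
    using that ex_has_least_nat[of "\<lambda>p. dwalk V A p u v" p length]
    unfolding shortest_dpath_def by blast
qed

lemma self_in_interval:
  assumes "s \<in> V"
  shows "s \<in> interval V A s s"
proof -
  have "shortest_dpath V A [s] s s"
    using assms unfolding shortest_dpath_def dwalk_def by (simp add: Suc_leI)
  then show ?thesis unfolding interval_def by force
qed

lemma interval_subset_interval_set:
  "a \<in> X \<Longrightarrow> b \<in> X \<Longrightarrow> interval V A a b \<subseteq> interval_set V A X"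
  unfolding interval_set_def by blast

text \<open>\<open>edges_avoiding A z\<close> is the edge relation of the underlying undirected graph of \<open>T - z\<close>,
  so \<open>(x, y) \<notin> (edges_avoiding A z)\<^sup>*\<close> says that \<open>z\<close> separates \<open>x\<close> from \<open>y\<close>
  (note that \<open>(z, z)\<close> is always in the closure).\<close>

definition edges_avoiding :: "('a \<times> 'a) set \<Rightarrow> 'a \<Rightarrow> ('a \<times> 'a) set" where
  "edges_avoiding A z = {(x, y). uadj A x y \<and> x \<noteq> z \<and> y \<noteq> z}"

lemma edges_avoiding_rtrancl_sym:
  "(x, y) \<in> (edges_avoiding A z)\<^sup>* \<Longrightarrow> (y, x) \<in> (edges_avoiding A z)\<^sup>*"
proof -
  have "sym (edges_avoiding A z)" by (auto simp: sym_def edges_avoiding_def uadj_def)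
  then show "(x, y) \<in> (edges_avoiding A z)\<^sup>* \<Longrightarrow> (y, x) \<in> (edges_avoiding A z)\<^sup>*"
    using sym_rtrancl symD by metis
qed

lemma walk_avoiding_rtrancl:
  assumes "walk A p" "z \<notin> set p"
  shows "(hd p, last p) \<in> (edges_avoiding A z)\<^sup>*"
proof -
  have "walk (edges_avoiding A z) p"
    by (rule walk_mono[OF assms(1)]) (use assms(2) in \<open>auto simp: edges_avoiding_def uadj_def\<close>)
  then show ?thesis by (rule walk_rtrancl)
qed

lemma walk_through_separator:
  "walk A p \<Longrightarrow> (hd p, last p) \<notin> (edges_avoiding A z)\<^sup>* \<Longrightarrow> z \<in> set p"
  using walk_avoiding_rtrancl by meson

lemma separator_in_interval:
  assumes "digraph V A" "s \<in> V" "(s, t) \<in> A\<^sup>*" "(s, t) \<notin> (edges_avoiding A z)\<^sup>*"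
  shows "z \<in> interval V A s t"
proof -
  obtain p where p: "shortest_dpath V A p s t" using shortest_dpath_exists assms(1-3) .
  then have "walk A p" "hd p = s" "last p = t"
    by (simp_all add: shortest_dpath_def dwalk_iff_walk)
  then have "z \<in> set p" using walk_through_separator[of A p z] assms(4) by simp
  with p show ?thesis unfolding interval_def by blast
qed

lemma walk_avoiding_not_mem:
  "walk (edges_avoiding A z) p \<Longrightarrow> hd p \<noteq> z \<Longrightarrow> z \<notin> set p"
  by (induction p) (auto simp: walk_Cons edges_avoiding_def)

lemma neighbours_separated:
  assumes T: "ditree V A" and c: "uadj A z c1" "uadj A z c2" "c1 \<noteq> c2"
  shows "(c1, c2) \<notin> (edges_avoiding A z)\<^sup>*"
proof
  assume "(c1, c2) \<in> (edges_avoiding A z)\<^sup>*"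
  then obtain p where p: "walk (edges_avoiding A z) p" "hd p = c1" "last p = c2" "distinct p"
    by (rule rtrancl_imp_distinct_walk)
  have A: "A \<subseteq> V \<times> V" "\<And>v. (v, v) \<notin> A" using T by (auto simp: ditree_def digraph_def)
  then have "c1 \<noteq> z" "z \<in> V" "c1 \<in> V" using c by (auto simp: uadj_def)
  then have "z \<notin> set p" using walk_avoiding_not_mem p by metis
  have "length p \<noteq> 1" using p c(3) by (auto simp: length_Suc_conv)
  then have "length p \<ge> 2" using p(1) by (cases p) (auto simp: walk_def Suc_le_eq)
  let ?U = "{(x, y). uadj A x y}"
  have U: "?U \<subseteq> V \<times> V" using A by (auto simp: uadj_def)
  have "walk ?U p" by (rule walk_mono[OF p(1)]) (simp add: edges_avoiding_def)
  then have "walk ?U (p @ [z])"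
    using c(2) p(3) by (auto simp: walk_def successively_append_iff uadj_def)
  moreover have "set (p @ [z]) \<subseteq> V"
    using walk_set_subset[OF \<open>walk ?U p\<close> U] p(2) \<open>c1 \<in> V\<close> \<open>z \<in> V\<close> by simp
  ultimately have "ucycle V A (p @ [z])"
    using \<open>length p \<ge> 2\<close> \<open>z \<notin> set p\<close> p c(1)
    unfolding ucycle_def walk_def successively_conv_nth by (auto simp: uadj_def)
  then show False using T by (auto simp: ditree_def)
qed

lemma interior_vertex_separates:
  assumes T: "ditree V A" and p: "walk A p" "distinct p"
    and z: "z \<in> set p" "z \<noteq> hd p" "z \<noteq> last p"
  shows "(hd p, last p) \<notin> (edges_avoiding A z)\<^sup>*"
proof
  assume conn: "(hd p, last p) \<in> (edges_avoiding A z)\<^sup>*"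
  obtain p1 p2 where pp: "p = p1 @ z # p2" using z(1) by (meson split_list)
  have ne: "p1 \<noteq> []" "p2 \<noteq> []" using z pp by auto
  have w: "walk A (p1 @ [z])" "walk A (z # p2)"
    using walk_append_iff[of A p1 z p2] p(1) unfolding pp by simp_all
  have w1: "walk A p1" "(last p1, z) \<in> A" using w(1) ne by (simp_all add: walk_snoc)
  have w2: "walk A p2" "(z, hd p2) \<in> A" using w(2) ne by (simp_all add: walk_Cons)
  have "uadj A z (last p1)" "uadj A z (hd p2)" using w1 w2 by (simp_all add: uadj_def)
  moreover have "last p1 \<noteq> hd p2"
    using p(2) pp last_in_set[OF ne(1)] hd_in_set[OF ne(2)] by auto
  moreover have "(last p1, hd p2) \<in> (edges_avoiding A z)\<^sup>*"
  proof -
    note w1(1) w2(1)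
    moreover have "z \<notin> set p1" "z \<notin> set p2" using p(2) pp by auto
    ultimately have "(hd p, last p1) \<in> (edges_avoiding A z)\<^sup>*"
      "(hd p2, last p) \<in> (edges_avoiding A z)\<^sup>*"
      using walk_avoiding_rtrancl pp ne by fastforce+
    with conn show ?thesis by (meson edges_avoiding_rtrancl_sym rtrancl_trans)
  qed
  ultimately show False by (metis neighbours_separated[OF T])
qed

lemma neighbour_separated_from:
  assumes T: "ditree V A" and "z \<in> V" "w \<in> V" "z \<noteq> w" "\<not> leaf V A z"
  obtains c where "uadj A z c" "c \<noteq> z" "(w, c) \<notin> (edges_avoiding A z)\<^sup>*"
proof -
  have dg: "digraph V A" using T by (simp add: ditree_def)
  have "(z, w) \<in> (A \<union> A\<inverse>)\<^sup>*" using T assms(2,3) by (auto simp: ditree_def uconnected_def)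
  then obtain y where "(z, y) \<in> A \<union> A\<inverse>" using assms(4) by (metis converse_rtranclE)
  then have y: "y \<in> {x \<in> V. uadj A z x}" using dg by (auto simp: uadj_def digraph_def)
  have "card {x \<in> V. uadj A z x} \<noteq> 1" using assms(2,5) by (simp add: leaf_def)
  then have "{x \<in> V. uadj A z x} \<noteq> {y}" by force
  then obtain c where c: "uadj A z c" "c \<noteq> y" using y by auto
  have no_loop: "\<And>x. uadj A z x \<Longrightarrow> x \<noteq> z" using dg by (auto simp: digraph_def uadj_def)
  have "(y, c) \<notin> (edges_avoiding A z)\<^sup>*"
    using neighbours_separated[OF T _ c(1)] y c(2) by simp
  moreover have "(y, c) \<in> (edges_avoiding A z)\<^sup>*"
    if "(w, y) \<in> (edges_avoiding A z)\<^sup>*" "(w, c) \<in> (edges_avoiding A z)\<^sup>*"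
    by (rule rtrancl_trans[OF edges_avoiding_rtrancl_sym[OF that(1)] that(2)])
  ultimately show thesis using that c y no_loop by blast
qed

lemma edges_avoiding_rtrancl_cases:
  assumes "w \<noteq> u" "(w, b) \<in> (edges_avoiding A z)\<^sup>*"
  shows "(w, b) \<in> (edges_avoiding A u)\<^sup>* \<or> (w, u) \<in> (edges_avoiding A z)\<^sup>*"
  using assms(2)
proof (induction rule: rtrancl_induct)
  case (step x y)
  show ?case
  proof (cases "(w, u) \<in> (edges_avoiding A z)\<^sup>* \<or> y = u")
    case True
    with step show ?thesis by (auto intro: rtrancl_into_rtrancl)
  next
    case False
    with step.IH have wx: "(w, x) \<in> (edges_avoiding A u)\<^sup>*" by blast
    moreover have "x \<noteq> u"
      using wx assms(1) by (induction rule: rtrancl_induct) (auto simp: edges_avoiding_def)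
    ultimately show ?thesis
      using False step(2) by (auto simp: edges_avoiding_def intro: rtrancl_into_rtrancl)
  qed
qed simp

lemma source_set_pred_closed:
  assumes "source_set V A S" "(a, s) \<in> A\<^sup>*" "s \<in> S"
  shows "a \<in> S"
  using assms(2,3)
proof (induction rule: converse_rtrancl_induct)
  case (step y y')
  with assms(1) show ?case by (auto simp: source_set_def in_nbhd_def)
qed

lemma source_set_strongly_connected:
  "source_set V A S \<Longrightarrow> x \<in> S \<Longrightarrow> y \<in> S \<Longrightarrow> (x, y) \<in> A\<^sup>*"
  by (simp add: source_set_def strong_component_def reach_def)

lemma source_set_subset: "source_set V A S \<Longrightarrow> S \<subseteq> V"
  by (simp add: source_set_def strong_component_def)

text \<open>Take a neighbour \<open>c\<close> of \<open>z\<close> on the far side from \<open>w\<close>. A geodesic of \<open>M\<close> through \<open>c\<close>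
  ending on the near side would pass through \<open>z\<close> after \<open>c\<close>, so it would start in \<open>S\<close>, i.e. at
  \<open>u\<close>, and then pass through \<open>z\<close> before \<open>c\<close> as well.\<close>

lemma member_beyond_source_vertex:
  assumes T: "ditree V A" and src: "source_set V A S" and S: "z \<in> S" "w \<in> S" "z \<noteq> w"
    and nl: "\<not> leaf V A z" and G: "geodetic V A M" and MS: "M \<inter> S = {u}"
    and u: "u = z \<or> (w, u) \<in> (edges_avoiding A z)\<^sup>*"
  obtains b where "b \<in> M - {u}" "(z, b) \<in> A\<^sup>*" "(w, b) \<notin> (edges_avoiding A z)\<^sup>*"
proof -
  have "z \<in> V" "w \<in> V" using S source_set_subset[OF src] by auto
  then obtain c where c: "uadj A z c" "c \<noteq> z" "(w, c) \<notin> (edges_avoiding A z)\<^sup>*"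
    using neighbour_separated_from[OF T _ _ S(3) nl] by metis
  have zc: "(z, c) \<in> A\<^sup>*"
  proof (cases "(z, c) \<in> A")
    case False
    then have "c \<in> S" using c(1) source_set_pred_closed[OF src _ S(1)] by (auto simp: uadj_def)
    then show ?thesis using source_set_strongly_connected[OF src S(1)] by blast
  qed simp
  have "c \<in> V" using c(1) T by (auto simp: ditree_def digraph_def uadj_def)
  then obtain a b p where ab: "a \<in> M" "b \<in> M" and p: "shortest_dpath V A p a b" "c \<in> set p"
    using G unfolding geodetic_def interval_set_def interval_def by blast
  have wp: "walk A p" "hd p = a" "last p = b"
    using p(1) by (simp_all add: shortest_dpath_def dwalk_iff_walk)
  have "distinct p" using shortest_dpath_distinct[OF p(1)] .
  obtain p1 p2 where pp: "p = p1 @ c # p2" using p(2) by (meson split_list)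
  have w1: "walk A (p1 @ [c])" and w2: "walk A (c # p2)"
    using walk_append_iff[of A p1 c p2] wp(1) unfolding pp by simp_all
  have hd1: "hd (p1 @ [c]) = a" and last2: "last (c # p2) = b" using wp pp by (cases p1; simp)+
  have cb: "(c, b) \<in> A\<^sup>*" using walk_rtrancl[OF w2] last2 by simp
  show thesis
  proof (cases "b \<noteq> z \<and> (w, b) \<notin> (edges_avoiding A z)\<^sup>*")
    case True
    moreover have "b \<noteq> u" using True u by auto
    ultimately show thesis using that ab rtrancl_trans[OF zc cb] by blast
  next
    case False
    have "z \<in> set (c # p2)"
    proof (cases "b = z")
      case True
      then show ?thesis using last2 by (metis last_in_set list.distinct(1))
    next
      case b: False
      show ?thesis
      proof (rule walk_through_separator[OF w2], rule notI)
        assume "(hd (c # p2), last (c # p2)) \<in> (edges_avoiding A z)\<^sup>*"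
        then have "(b, c) \<in> (edges_avoiding A z)\<^sup>*"
          using last2 edges_avoiding_rtrancl_sym by simp
        moreover have "(w, b) \<in> (edges_avoiding A z)\<^sup>*" using False b by simp
        ultimately show False using c(3) rtrancl_trans by metis
      qed
    qed
    then have z2: "z \<in> set p2" using c(2) by simp
    have "(a, c) \<in> A\<^sup>*" using walk_rtrancl[OF w1] hd1 by simp
    moreover have "(c, z) \<in> A\<^sup>*" using walk_rtrancl_mem(1)[OF w2 \<open>z \<in> set (c # p2)\<close>] by simp
    ultimately have "a \<in> S" using source_set_pred_closed[OF src _ S(1)] rtrancl_trans by metis
    then have "a = u" using ab MS by blast
    have "z \<in> set (p1 @ [c])"
    proof (cases "u = z")
      case True
      then show ?thesis using hd1 \<open>a = u\<close> by (metis hd_in_set snoc_eq_iff_butlast)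
    next
      case False
      show ?thesis
      proof (rule walk_through_separator[OF w1], rule notI)
        assume "(hd (p1 @ [c]), last (p1 @ [c])) \<in> (edges_avoiding A z)\<^sup>*"
        then have "(u, c) \<in> (edges_avoiding A z)\<^sup>*" using hd1 \<open>a = u\<close> by simp
        moreover have "(w, u) \<in> (edges_avoiding A z)\<^sup>*" using u False by simp
        ultimately show False using c(3) rtrancl_trans by metis
      qed
    qed
    with z2 c(2) \<open>distinct p\<close> pp show thesis by auto
  qed
qed

lemma source_vertex_in_interval_set:
  assumes T: "ditree V A" and src: "source_set V A S" and nl: "\<forall>x\<in>S. \<not> leaf V A x"
    and G: "geodetic V A M" and MS: "M \<inter> S = {u}" and w: "w \<in> S" and z: "z \<in> S"
  shows "z \<in> interval_set V A (M - {u} \<union> {w})"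
proof -
  let ?N = "M - {u} \<union> {w}"
  have dg: "digraph V A" using T by (simp add: ditree_def)
  have "w \<in> V" using w source_set_subset[OF src] by auto
  have in_N: "z \<in> interval_set V A ?N"
    if "b \<in> M - {u}" "(z, b) \<in> A\<^sup>*" "(w, b) \<notin> (edges_avoiding A z)\<^sup>*" for b
  proof -
    have "(w, b) \<in> A\<^sup>*"
      using rtrancl_trans[OF source_set_strongly_connected[OF src w z] that(2)] .
    then have "z \<in> interval V A w b" using separator_in_interval[OF dg \<open>w \<in> V\<close>] that(3) by blast
    then show ?thesis using interval_subset_interval_set[of w ?N b] that(1) by blast
  qed
  show ?thesis
  proof (cases "z = w")
    case True
    then show ?thesis
      using self_in_interval[OF \<open>w \<in> V\<close>] interval_subset_interval_set[of w ?N w] by blast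
  next
    case zw: False
    show ?thesis
    proof (cases "u = z \<or> (w, u) \<in> (edges_avoiding A z)\<^sup>*")
      case True
      with member_beyond_source_vertex[OF T src z w zw _ G MS] nl z in_N show ?thesis by metis
    next
      case False
      \<comment> \<open>Use a member beyond \<open>u\<close> instead; \<open>z\<close> separates it from \<open>w\<close> since \<open>u\<close> does.\<close>
      then have "u \<noteq> w" by auto
      have u: "u \<in> S" using MS by blast
      obtain b where b: "b \<in> M - {u}" "(u, b) \<in> A\<^sup>*" "(w, b) \<notin> (edges_avoiding A u)\<^sup>*"
        using member_beyond_source_vertex[OF T src u w \<open>u \<noteq> w\<close> _ G MS] nl u by metis
      have "(w, b) \<notin> (edges_avoiding A z)\<^sup>*"
        using edges_avoiding_rtrancl_cases[OF \<open>u \<noteq> w\<close>[symmetric]] b(3) False by blast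
      moreover have "(z, b) \<in> A\<^sup>*"
        using rtrancl_trans[OF source_set_strongly_connected[OF src z u] b(2)] .
      ultimately show ?thesis using in_N b(1) by blast
    qed
  qed
qed

lemma outside_vertex_in_interval_set:
  assumes T: "ditree V A" and src: "source_set V A S"
    and G: "geodetic V A M" and MS: "M \<inter> S = {u}" and w: "w \<in> S"
    and z: "z \<in> V" "z \<notin> S"
  shows "z \<in> interval_set V A (M - {u} \<union> {w})"
proof -
  let ?N = "M - {u} \<union> {w}"
  have dg: "digraph V A" using T by (simp add: ditree_def)
  have u: "u \<in> S" "u \<in> M" using MS by auto
  obtain a b p where ab: "a \<in> M" "b \<in> M" and p: "shortest_dpath V A p a b" "z \<in> set p"
    using G z(1) unfolding geodetic_def interval_set_def interval_def by blast
  have wp: "walk A p" "hd p = a" "last p = b" "set p \<subseteq> V"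
    using p(1) by (simp_all add: shortest_dpath_def dwalk_iff_walk)
  have "z \<in> interval V A a b" using p unfolding interval_def by blast
  have "b \<noteq> u"
  proof
    assume "b = u"
    then have "(z, u) \<in> A\<^sup>*" using walk_rtrancl_mem(2)[OF wp(1) p(2)] wp(3) by simp
    then show False using source_set_pred_closed[OF src _ u(1)] z(2) by blast
  qed
  show ?thesis
  proof (cases "a = u")
    case False
    then show ?thesis
      using \<open>z \<in> interval V A a b\<close> interval_subset_interval_set[of a ?N b] ab \<open>b \<noteq> u\<close> by blast
  next
    case True
    have "b \<in> V" using wp(1,3,4) last_in_set[of p] by (auto simp: walk_def)
    have "w \<in> V" using w source_set_subset[OF src] by auto
    consider "z = b" | "z \<noteq> b" by blast
    then have "z \<in> interval V A b b \<or> z \<in> interval V A w b"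
    proof cases
      case 1
      then show ?thesis using self_in_interval[OF \<open>b \<in> V\<close>] by simp
    next
      case 2
      have "z \<noteq> u" using z(2) u(1) by blast
      then have ub: "(u, b) \<notin> (edges_avoiding A z)\<^sup>*"
        using interior_vertex_separates[OF T wp(1) shortest_dpath_distinct[OF p(1)] p(2)] wp True 2
        by simp
      moreover have wu: "(w, u) \<in> (edges_avoiding A z)\<^sup>*"
      proof -
        obtain q where q: "shortest_dpath V A q w u"
          using shortest_dpath_exists[OF dg \<open>w \<in> V\<close> source_set_strongly_connected[OF src w u(1)]] .
        then have wq: "walk A q" "hd q = w" "last q = u"
          by (simp_all add: shortest_dpath_def dwalk_iff_walk)
        have "z \<notin> set q"
          using walk_rtrancl_mem(2)[OF wq(1)] wq(3) source_set_pred_closed[OF src _ u(1)] z(2) by metis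
        then show ?thesis using walk_avoiding_rtrancl[OF wq(1)] wq by simp
      qed
      ultimately have "(w, b) \<notin> (edges_avoiding A z)\<^sup>*"
        using rtrancl_trans[OF edges_avoiding_rtrancl_sym[OF wu]] by blast
      moreover have "(w, b) \<in> A\<^sup>*"
        using source_set_strongly_connected[OF src w u(1)] walk_rtrancl[OF wp(1)] wp True
        by (simp add: rtrancl_trans)
      ultimately show ?thesis using separator_in_interval[OF dg \<open>w \<in> V\<close>] by blast
    qed
    then show ?thesis
      using interval_subset_interval_set[of b ?N b] interval_subset_interval_set[of w ?N b]
        ab \<open>b \<noteq> u\<close> by blast
  qed
qed

lemma interval_set_subset: "interval_set V A X \<subseteq> V"
  unfolding interval_set_def interval_def shortest_dpath_def dwalk_def by blast

lemma geodetic_exchange_in_source_set: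
  assumes T: "ditree V A" and src: "source_set V A S" and nl: "\<forall>x\<in>S. \<not> leaf V A x"
    and G: "geodetic V A M" and MS: "M \<inter> S = {u}" and w: "w \<in> S"
  shows "geodetic V A (M - {u} \<union> {w})"
  unfolding geodetic_def
proof
  show "M - {u} \<union> {w} \<subseteq> V" using G w source_set_subset[OF src] by (auto simp: geodetic_def)
  have "V \<subseteq> interval_set V A (M - {u} \<union> {w})"
    using source_vertex_in_interval_set[OF T src nl G MS w]
      outside_vertex_in_interval_set[OF T src G MS w] by blast
  then show "interval_set V A (M - {u} \<union> {w}) = V" by (rule equalityI[OF interval_set_subset])
qed

lemma min_geodetic_exchange_in_source_set:
  assumes T: "ditree V A" and src: "source_set V A S" and nl: "\<forall>x\<in>S. \<not> leaf V A x"
    and G: "min_geodetic V A M" and MS: "M \<inter> S = {u}" and w: "w \<in> S"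
  shows "min_geodetic V A (M - {u} \<union> {w})"
proof -
  have "finite M"
    using G T finite_subset by (auto simp: min_geodetic_def geodetic_def ditree_def digraph_def)
  moreover have "u \<in> M" "w \<notin> M - {u}" using MS w by auto
  ultimately have "card (M - {u} \<union> {w}) = card M"
    using card_Suc_Diff1[of M u] by (simp add: card_insert_disjoint)
  moreover have "geodetic V A (M - {u} \<union> {w})"
    using geodetic_exchange_in_source_set[OF T src nl _ MS w] G by (simp add: min_geodetic_def)
  ultimately show ?thesis using G by (simp add: min_geodetic_def)
qed

lemma uadj_converse: "uadj (A\<inverse>) = uadj A"
  by (intro ext) (auto simp: uadj_def)

lemma ditree_converse: "ditree V (A\<inverse>) \<longleftrightarrow> ditree V A"
proof -
  have "A\<inverse> \<union> (A\<inverse>)\<inverse> = A \<union> A\<inverse>" by auto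
  then show ?thesis
    unfolding ditree_def digraph_def uconnected_def ucycle_def uadj_converse by auto
qed

lemma leaf_converse: "leaf V (A\<inverse>) = leaf V A"
  unfolding leaf_def uadj_converse ..

lemma sink_set_iff_source_set_converse: "sink_set V A S \<longleftrightarrow> source_set V (A\<inverse>) S"
  unfolding sink_set_def source_set_def strong_component_def reach_def in_nbhd_def out_nbhd_def
  by (auto simp: rtrancl_converse)

lemma dwalk_converse: "dwalk V (A\<inverse>) p u v \<longleftrightarrow> dwalk V A (rev p) v u"
  unfolding dwalk_iff_walk walk_def by (auto simp: hd_rev last_rev)

lemma shortest_dpath_converse:
  "shortest_dpath V (A\<inverse>) p u v \<longleftrightarrow> shortest_dpath V A (rev p) v u"
  unfolding shortest_dpath_def dwalk_converse by (metis length_rev rev_rev_ident)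

lemma interval_converse: "interval V (A\<inverse>) u v = interval V A v u"
proof -
  have "{set p |p. shortest_dpath V A (rev p) v u} = {set p |p. shortest_dpath V A p v u}"
    by (metis rev_rev_ident set_rev)
  then show ?thesis unfolding interval_def shortest_dpath_converse by simp
qed

lemma min_geodetic_converse: "min_geodetic V (A\<inverse>) M \<longleftrightarrow> min_geodetic V A M"
proof -
  have "interval_set V (A\<inverse>) X = interval_set V A X" for X
    unfolding interval_set_def interval_converse by blast
  then show ?thesis unfolding min_geodetic_def geodetic_def by simp
qed

theorem lemma4:
  fixes V :: "'a set" and A :: "('a \<times> 'a) set" and S M :: "'a set" and u w :: 'a
  assumes "ditree V A"
    and "source_set V A S \<or> sink_set V A S"
    and "card S \<ge> 2"
    and "\<forall>x\<in>S. \<not> leaf V A x"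
    and "min_geodetic V A M"
    and "M \<inter> S = {u}"
    and "w \<in> S"
  shows "min_geodetic V A ((M - {u}) \<union> {w})"
proof -
  from assms(2) consider "source_set V A S" | "source_set V (A\<inverse>) S"
    using sink_set_iff_source_set_converse by blast
  then show ?thesis
  proof cases
    case 1
    show ?thesis by (rule min_geodetic_exchange_in_source_set[OF assms(1) 1 assms(4-7)])
  next
    case 2
    have "min_geodetic V (A\<inverse>) (M - {u} \<union> {w})"
      by (rule min_geodetic_exchange_in_source_set[OF _ 2])
        (use assms in \<open>simp_all add: ditree_converse leaf_converse min_geodetic_converse\<close>)
    then show ?thesis by (simp add: min_geodetic_converse)
  qed
qed

end
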